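(* A feasible solution $(\bm\alpha,\bm\beta)\ge0$ of the problem $$\Gamma^*=\max_{\bm\alpha,\bm\beta\ge0}\min_{c}\alpha(c)\min_{d\in\mathcal P_c}\min_{d'\in\mathcal U_c}G_{d,d'}(\beta(c,d),\beta(c,d'))$$ subject to $\sum_c\alpha(c)=1$ and $\sum_{d\in\mathcal D_c}\beta(c,d)=1$, is optimal only if the following holds: there exists $z>0$ such that for all $c\in\mathcal C$, $d\in\mathcal P_c$ and $d'\in\mathcal U_c$, $$\min_{\tilde d\in\mathcal P_c}\alpha(c)G_{\tilde d,d'}(\beta(c,\tilde d),\beta(c,d'))=\min_{\tilde d'\in\mathcal U_c}\alpha(c)G_{d,\tilde d'}(\beta(c,d),\beta(c,\tilde d'))=z.$$
   Context: Setting. - $\mathcal C$ is a finite set of contexts and $\mathcal D=\bigsqcup_c\mathcal D_c$ a finite set of designs. - Design $d$ has true parameter $\theta^*_d=(\mu^*_d,\eta^*_d)\in\Theta=M\times H$ ($M\subseteq\mathbb R$), with distinct $\mu^*_d$. - $\Theta$ is compact; the KL divergence $D(\theta^*\Vert\theta)$ of the parametric family is finite and continuously differentiable in $\theta$. - $\mathcal P_c$ is the set of the $m_c$ designs in $\mathcal D_c$ with largest $\mu^*_d$, and $\mathcal U_c=\mathcal D_c\setminus\mathcal P_c$. Rate function. For $x,y\ge0$, $$G_{d,d'}(x,y)=\inf\{xD(\theta^*_d\Vert\theta_d)+yD(\theta^*_{d'}\Vert\theta_{d'}):\theta_d,\theta_{d'}\in\Theta,\ \mu_{d'}\ge\mu_d\}.$$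 $G_{d,d'}$ is non-decreasing, concave, continuous, and positively homogeneous of degree 1. *)

theory Defs
  imports "HOL-Analysis.Analysis"
begin

text \<open>Parameters are pairs (mu, eta) in real x 'h; mu = fst.
  KL is the KL divergence D(theta1 || theta2) of the parametric family.\<close>

definition rateG ::
  "((real \<times> 'h) \<Rightarrow> (real \<times> 'h) \<Rightarrow> real) \<Rightarrow> (real \<times> 'h) set \<Rightarrow>
   ('d \<Rightarrow> real \<times> 'h) \<Rightarrow> 'd \<Rightarrow> 'd \<Rightarrow> real \<Rightarrow> real \<Rightarrow> real" where
  "rateG KL Theta thstar d d' x y =
     Inf {x * KL (thstar d) th + y * KL (thstar d') th' | th th'.
            th \<in> Theta \<and> th' \<in> Theta \<and> fst th' \<ge> fst th}"

text \<open>P_c: the m_c designs of D_c with largest true mean (means are distinct).\<close>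
definition topset :: "('c \<Rightarrow> 'd set) \<Rightarrow> ('c \<Rightarrow> nat) \<Rightarrow> ('d \<Rightarrow> real) \<Rightarrow> 'c \<Rightarrow> 'd set" where
  "topset Dc m mu c = {d \<in> Dc c. card {d' \<in> Dc c. mu d' > mu d} < m c}"

definition botset :: "('c \<Rightarrow> 'd set) \<Rightarrow> ('c \<Rightarrow> nat) \<Rightarrow> ('d \<Rightarrow> real) \<Rightarrow> 'c \<Rightarrow> 'd set" where
  "botset Dc m mu c = Dc c - topset Dc m mu c"

definition feasible :: "'c set \<Rightarrow> ('c \<Rightarrow> 'd set) \<Rightarrow> ('c \<Rightarrow> real) \<Rightarrow> ('c \<Rightarrow> 'd \<Rightarrow> real) \<Rightarrow> bool" where
  "feasible C Dc \<alpha> \<beta> \<longleftrightarrow>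
     (\<forall>c\<in>C. \<alpha> c \<ge> 0) \<and> (\<forall>c\<in>C. \<forall>d\<in>Dc c. \<beta> c d \<ge> 0) \<and>
     (\<Sum>c\<in>C. \<alpha> c) = 1 \<and> (\<forall>c\<in>C. (\<Sum>d\<in>Dc c. \<beta> c d) = 1)"

definition objective ::
  "((real \<times> 'h) \<Rightarrow> (real \<times> 'h) \<Rightarrow> real) \<Rightarrow> (real \<times> 'h) set \<Rightarrow> ('d \<Rightarrow> real \<times> 'h) \<Rightarrow>
   'c set \<Rightarrow> ('c \<Rightarrow> 'd set) \<Rightarrow> ('c \<Rightarrow> nat) \<Rightarrow> ('c \<Rightarrow> real) \<Rightarrow> ('c \<Rightarrow> 'd \<Rightarrow> real) \<Rightarrow> real" where
  "objective KL Theta thstar C Dc m \<alpha> \<beta> =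
     Min ((\<lambda>c. \<alpha> c * Min ((\<lambda>d. Min ((\<lambda>d'. rateG KL Theta thstar d d' (\<beta> c d) (\<beta> c d'))
              ` botset Dc m (\<lambda>d. fst (thstar d)) c))
              ` topset Dc m (\<lambda>d. fst (thstar d)) c)) ` C)"

end

theory Submission
  imports Defs
begin

text \<open>
  Let \<Gamma> be the optimal value; it is positive because the uniform allocation already gives
  every context a positive contribution. At an optimum every context contributes exactly \<Gamma>:
  if one contributed more, moving a little of its weight \<alpha>(c) proportionally to the other
  contexts would lift all contributions above \<Gamma>. Within a context, if every pair through some
  design e stayed strictly above the context minimum, shrinking \<beta>(c, e) slightly and
  renormalising would multiply all other weights by some t > 1; since G is positively homogeneous
  and monotone, the pairs avoiding e strictly increase while those through e stay above the old
  minimum, so the context would contribute more than \<Gamma>, which was just excluded.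
\<close>

context
  fixes KL :: "real \<times> 'h::topological_space \<Rightarrow> real \<times> 'h \<Rightarrow> real"
    and T :: "(real \<times> 'h) set" and thstar :: "'d \<Rightarrow> real \<times> 'h"
    and d d' :: 'd
  assumes KL_nonneg: "\<forall>a\<in>T. \<forall>b\<in>T. 0 \<le> KL a b"
    and thstar_in: "thstar d \<in> T" "thstar d' \<in> T"
begin

lemma rateG_eq_INF:
  "rateG KL T thstar d d' x y =
     (INF p \<in> {p \<in> T \<times> T. fst (fst p) \<le> fst (snd p)}.
        x * KL (thstar d) (fst p) + y * KL (thstar d') (snd p))"
  unfolding rateG_def by (rule arg_cong[where f = Inf]) force

lemma rateG_le:
  assumes "0 \<le> x" "0 \<le> y" "th \<in> T" "th' \<in> T" "fst th \<le> fst th'"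
  shows "rateG KL T thstar d d' x y \<le> x * KL (thstar d) th + y * KL (thstar d') th'"
proof -
  have "bdd_below ((\<lambda>p. x * KL (thstar d) (fst p) + y * KL (thstar d') (snd p)) `
          {p \<in> T \<times> T. fst (fst p) \<le> fst (snd p)})"
    by (rule bdd_belowI2[where m = 0])
      (use assms KL_nonneg thstar_in in \<open>auto intro!: add_nonneg_nonneg mult_nonneg_nonneg\<close>)
  then show ?thesis
    unfolding rateG_eq_INF using assms by (intro cINF_lower2[where x = "(th, th')"]) auto
qed

lemma rateG_ge:
  assumes "\<And>th th'. th \<in> T \<Longrightarrow> th' \<in> T \<Longrightarrow> fst th \<le> fst th' \<Longrightarrow>
           r \<le> x * KL (thstar d) th + y * KL (thstar d') th'"
  shows "r \<le> rateG KL T thstar d d' x y"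
  unfolding rateG_eq_INF
proof (rule cINF_greatest)
  have "(thstar d, thstar d) \<in> {p \<in> T \<times> T. fst (fst p) \<le> fst (snd p)}"
    using thstar_in by simp
  then show "{p \<in> T \<times> T. fst (fst p) \<le> fst (snd p)} \<noteq> {}"
    by blast
qed (use assms in auto)

lemma rateG_eq_0:
  assumes "\<forall>a\<in>T. KL a a = 0" "0 \<le> x" "0 \<le> y" "x = 0 \<or> y = 0"
  shows "rateG KL T thstar d d' x y = 0"
proof (rule antisym)
  show "0 \<le> rateG KL T thstar d d' x y"
    using assms KL_nonneg thstar_in by (intro rateG_ge) auto
  show "rateG KL T thstar d d' x y \<le> 0"
    using assms(4)
  proof
    assume "x = 0"
    then show ?thesis
      using rateG_le[of x y "thstar d'" "thstar d'"] assms thstar_in by simp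
  next
    assume "y = 0"
    then show ?thesis
      using rateG_le[of x y "thstar d" "thstar d"] assms thstar_in by simp
  qed
qed

lemma rateG_scale_mono:
  assumes "0 \<le> x" "0 \<le> y" "0 < s" "s * x \<le> x'" "s * y \<le> y'"
  shows "s * rateG KL T thstar d d' x y \<le> rateG KL T thstar d d' x' y'"
proof (rule rateG_ge)
  fix th th' assume th: "th \<in> T" "th' \<in> T" "fst th \<le> fst th'"
  have "s * rateG KL T thstar d d' x y \<le> (s * x) * KL (thstar d) th + (s * y) * KL (thstar d') th'"
    using mult_left_mono[OF rateG_le[OF assms(1,2) th] less_imp_le[OF assms(3)]]
    by (simp add: algebra_simps)
  also have "\<dots> \<le> x' * KL (thstar d) th + y' * KL (thstar d') th'"
    using assms th KL_nonneg thstar_in by (intro add_mono mult_right_mono) auto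
  finally show "s * rateG KL T thstar d d' x y \<le> \<dots>" .
qed

lemma rateG_pos:
  assumes "compact T" and KL_cont: "\<forall>a\<in>T. continuous_on T (KL a)"
    and KL_eq_0: "\<forall>a\<in>T. \<forall>b\<in>T. KL a b = 0 \<longrightarrow> fst a = fst b"
    and "0 < x" "0 < y"
    and less: "fst (thstar d') < fst (thstar d)"
  shows "0 < rateG KL T thstar d d' x y"
proof -
  define S where "S = {p \<in> T \<times> T. fst (fst p) \<le> fst (snd p)}"
  define f where "f p = x * KL (thstar d) (fst p) + y * KL (thstar d') (snd p)" for p
  have "compact S"
    unfolding S_def Collect_conj_eq Collect_mem_eq
    by (intro compact_Int_closed compact_Times assms closed_Collect_le continuous_intros)
  moreover have "(thstar d, thstar d) \<in> S"
    unfolding S_def using thstar_in by simp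
  moreover have "continuous_on S f"
    unfolding f_def S_def using thstar_in
    by (intro continuous_intros continuous_on_compose2[OF KL_cont[rule_format]]) auto
  ultimately obtain p where p: "p \<in> S" and p_min: "\<forall>q\<in>S. f p \<le> f q"
    using continuous_attains_inf by (metis empty_iff)
  have "0 < f p"
  proof -
    have p_T: "fst p \<in> T" "snd p \<in> T" "fst (fst p) \<le> fst (snd p)"
      using p unfolding S_def by auto
    then have "KL (thstar d) (fst p) \<noteq> 0 \<or> KL (thstar d') (snd p) \<noteq> 0"
      using KL_eq_0 thstar_in less by force
    then show ?thesis
      unfolding f_def using p_T KL_nonneg thstar_in assms
      by (auto simp: add_nonneg_pos add_pos_nonneg order_le_neq_trans)
  qed
  also have "f p \<le> rateG KL T thstar d d' x y"
    using p_min unfolding f_def S_def by (intro rateG_ge) auto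
  finally show ?thesis .
qed

end

lemma topset_nonempty:
  assumes "finite (Dc c)" "Dc c \<noteq> {}" "0 < m c"
  shows "topset Dc m mu c \<noteq> {}"
proof -
  have "Max (mu ` Dc c) \<in> mu ` Dc c"
    using assms(1,2) by simp
  then obtain d where "d \<in> Dc c" "mu d = Max (mu ` Dc c)"
    by auto
  then have d: "d \<in> Dc c" "\<forall>d'\<in>Dc c. mu d' \<le> mu d"
    using assms(1) by simp_all
  then have "{d' \<in> Dc c. mu d < mu d'} = {}"
    by force
  then have "card {d' \<in> Dc c. mu d < mu d'} < m c"
    using assms(3) by (simp only: card.empty)
  then have "d \<in> topset Dc m mu c"
    unfolding topset_def using d(1) by simp
  then show ?thesis
    by blast
qed

lemma botset_nonempty:
  assumes "finite (Dc c)" "inj_on mu (Dc c)" "m c < card (Dc c)"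
  shows "botset Dc m mu c \<noteq> {}"
proof -
  have "Dc c \<noteq> {}"
    using assms(3) by auto
  then have "Min (mu ` Dc c) \<in> mu ` Dc c"
    using assms(1) by simp
  then obtain d where "d \<in> Dc c" "mu d = Min (mu ` Dc c)"
    by auto
  then have d: "d \<in> Dc c" "\<forall>d'\<in>Dc c. mu d \<le> mu d'"
    using assms(1) by simp_all
  have "mu d < mu x" if "x \<in> Dc c" "x \<noteq> d" for x
    using d that inj_on_eq_iff[OF assms(2)] by (metis order_le_neq_trans)
  then have "{d' \<in> Dc c. mu d < mu d'} = Dc c - {d}"
    by auto
  then have "card {d' \<in> Dc c. mu d < mu d'} = card (Dc c) - 1"
    using d(1) assms(1) by simp
  then show ?thesis
    unfolding botset_def topset_def using d(1) assms(3) by auto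
qed

lemma botset_mean_less_topset:
  assumes "finite (Dc c)" "inj_on mu (Dc c)"
    and d: "d \<in> topset Dc m mu c" and d': "d' \<in> botset Dc m mu c"
  shows "mu d' < mu d"
proof (rule ccontr)
  assume "\<not> mu d' < mu d"
  moreover have "d \<in> Dc c" "d' \<in> Dc c" "d \<noteq> d'"
    using d d' unfolding botset_def topset_def by auto
  ultimately have "mu d < mu d'"
    using assms(2) by (metis inj_on_eq_iff linorder_neqE_linordered_idom)
  then have "{x \<in> Dc c. mu d' < mu x} \<subseteq> {x \<in> Dc c. mu d < mu x}"
    by auto
  then have "card {x \<in> Dc c. mu d' < mu x} \<le> card {x \<in> Dc c. mu d < mu x}"
    using assms(1) by (intro card_mono) auto
  then show False
    using d d' unfolding botset_def topset_def by auto
qed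

lemma simplex_raise_min:
  fixes \<alpha> f :: "'c \<Rightarrow> real"
  assumes "finite C" "\<forall>c\<in>C. 0 \<le> \<alpha> c" "sum \<alpha> C = 1" "0 < r"
    and all_ge: "\<forall>c\<in>C. r \<le> \<alpha> c * f c" and "c0 \<in> C" and c0_gt: "r < \<alpha> c0 * f c0"
  obtains \<alpha>' where "\<forall>c\<in>C. 0 \<le> \<alpha>' c" "sum \<alpha>' C = 1" "\<forall>c\<in>C. r < \<alpha>' c * f c"
proof -
  have "\<alpha> c0 \<le> 1"
    using assms member_le_sum[of c0 C \<alpha>] by auto
  have "0 < \<alpha> c0 * f c0"
    using assms by linarith
  then have "0 < f c0"
    using assms(2,6) by (auto simp: zero_less_mult_iff)
  define \<delta> where "\<delta> = (\<alpha> c0 * f c0 - r) / (2 * f c0)"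
  have "0 < \<delta>" "\<delta> * f c0 < \<alpha> c0 * f c0 - r"
    unfolding \<delta>_def using \<open>0 < f c0\<close> c0_gt by (simp_all add: field_simps)
  \<comment> \<open>move weight \<delta> away from c0 and redistribute it proportionally\<close>
  define \<alpha>' where "\<alpha>' c = (1 + \<delta>) * \<alpha> c - (if c = c0 then \<delta> else 0)" for c
  have "sum \<alpha>' C = 1"
    unfolding \<alpha>'_def using assms by (simp add: sum_subtractf sum_distrib_left[symmetric])
  moreover have "\<forall>c\<in>C. r < \<alpha>' c * f c"
  proof
    fix c assume "c \<in> C"
    show "r < \<alpha>' c * f c"
    proof (cases "c = c0")
      case True
      have "r < \<alpha> c0 * f c0 - \<delta> * f c0"
        using \<open>\<delta> * f c0 < _\<close> by simp
      also have "\<dots> \<le> \<alpha>' c0 * f c0"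
        unfolding \<alpha>'_def using \<open>0 < \<delta>\<close> \<open>0 < f c0\<close> assms(2,6)
        by (simp add: algebra_simps)
      finally show ?thesis
        using True by simp
    next
      case False
      then have "\<alpha>' c * f c = \<alpha> c * f c + \<delta> * (\<alpha> c * f c)"
        unfolding \<alpha>'_def by (simp add: algebra_simps)
      moreover have "r \<le> \<alpha> c * f c"
        using all_ge \<open>c \<in> C\<close> by blast
      moreover have "0 < \<delta> * (\<alpha> c * f c)"
        using \<open>0 < r\<close> \<open>0 < \<delta>\<close> calculation(2) by simp
      ultimately show ?thesis
        by linarith
    qed
  qed
  moreover have "\<forall>c\<in>C. 0 \<le> \<alpha>' c"
  proof
    fix c assume "c \<in> C"
    show "0 \<le> \<alpha>' c"
    proof (cases "c = c0")
      case True
      have "r < \<alpha>' c0 * f c0"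
        using \<open>\<forall>c\<in>C. r < \<alpha>' c * f c\<close> \<open>c0 \<in> C\<close> by blast
      then have "0 < \<alpha>' c0 * f c0"
        using \<open>0 < r\<close> by linarith
      then show ?thesis
        using True \<open>0 < f c0\<close> by (simp add: zero_less_mult_iff)
    qed (use assms \<open>0 < \<delta>\<close> \<open>c \<in> C\<close> in \<open>simp add: \<alpha>'_def\<close>)
  qed
  ultimately show ?thesis
    using that by blast
qed

lemma simplex_shrink_coordinate:
  fixes w :: "'d \<Rightarrow> real"
  assumes "finite D" "\<forall>d\<in>D. 0 \<le> w d" "sum w D = 1" "e \<in> D" "0 < w e" "0 < \<epsilon>" "\<epsilon> < 1"
  obtains t w' where "1 < t" "\<forall>d\<in>D. 0 \<le> w' d" "sum w' D = 1"
    "\<forall>d\<in>D. (1 - \<epsilon>) * w d \<le> w' d" "\<forall>d\<in>D - {e}. w' d = t * w d"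
proof -
  have "w e \<le> 1"
    using assms member_le_sum[of e D w] by auto
  then have "0 < \<epsilon> * w e" "\<epsilon> * w e \<le> \<epsilon>"
    using assms by (simp_all add: mult_left_le)
  then have "0 < 1 - \<epsilon> * w e" "1 - \<epsilon> * w e < 1"
    using \<open>\<epsilon> < 1\<close> by linarith+
  define t where "t = 1 / (1 - \<epsilon> * w e)"
  define w' where "w' d = t * (if d = e then (1 - \<epsilon>) * w d else w d)" for d
  have "1 < t"
    unfolding t_def using \<open>0 < 1 - \<epsilon> * w e\<close> \<open>1 - \<epsilon> * w e < 1\<close> by simp
  have "(\<Sum>d\<in>D. if d = e then (1 - \<epsilon>) * w d else w d) = (\<Sum>d\<in>D. w d - (if d = e then \<epsilon> * w d else 0))"
    by (intro sum.cong) (auto simp: algebra_simps)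
  also have "\<dots> = 1 - \<epsilon> * w e"
    using assms by (simp add: sum_subtractf)
  finally have "sum w' D = 1"
    unfolding w'_def t_def using \<open>0 < 1 - \<epsilon> * w e\<close> by (simp add: sum_divide_distrib[symmetric])
  moreover have lower: "(1 - \<epsilon>) * w d \<le> w' d" if "d \<in> D" for d
  proof -
    have "(1 - \<epsilon>) * w d \<le> (if d = e then (1 - \<epsilon>) * w d else w d)"
      using assms that by (auto simp: mult_left_le_one_le)
    also have "\<dots> \<le> w' d"
      unfolding w'_def using assms that \<open>1 < t\<close> mult_right_mono[of 1 t] by simp
    finally show ?thesis .
  qed
  moreover have "\<forall>d\<in>D. 0 \<le> w' d"
    using order_trans[OF _ lower] assms by simp
  ultimately show ?thesis
    using that \<open>1 < t\<close> unfolding w'_def by auto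
qed

locale max_min_allocation =
  fixes C :: "'c set" and Dc P U :: "'c \<Rightarrow> 'd set"
    and G :: "'d \<Rightarrow> 'd \<Rightarrow> real \<Rightarrow> real \<Rightarrow> real"
  assumes finite_C: "finite C" and C_nonempty: "C \<noteq> {}"
    and finite_Dc: "c \<in> C \<Longrightarrow> finite (Dc c)"
    and P_subset: "c \<in> C \<Longrightarrow> P c \<subseteq> Dc c" and U_subset: "c \<in> C \<Longrightarrow> U c \<subseteq> Dc c"
    and P_nonempty: "c \<in> C \<Longrightarrow> P c \<noteq> {}" and U_nonempty: "c \<in> C \<Longrightarrow> U c \<noteq> {}"
    and P_U_disjoint: "c \<in> C \<Longrightarrow> P c \<inter> U c = {}"
    and G_eq_0: "\<lbrakk>c \<in> C; d \<in> P c; d' \<in> U c; 0 \<le> x; 0 \<le> y; x = 0 \<or> y = 0\<rbrakk>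
                   \<Longrightarrow> G d d' x y = 0"
    and G_scale_mono: "\<lbrakk>c \<in> C; d \<in> P c; d' \<in> U c; 0 \<le> x; 0 \<le> y; 0 < s; s * x \<le> x'; s * y \<le> y'\<rbrakk>
                   \<Longrightarrow> s * G d d' x y \<le> G d d' x' y'"
    and G_pos: "\<lbrakk>c \<in> C; d \<in> P c; d' \<in> U c; 0 < x; 0 < y\<rbrakk> \<Longrightarrow> 0 < G d d' x y"
begin

definition context_value :: "'c \<Rightarrow> ('d \<Rightarrow> real) \<Rightarrow> real" where
  "context_value c w = Min ((\<lambda>d. Min ((\<lambda>d'. G d d' (w d) (w d')) ` U c)) ` P c)"

definition "value" :: "('c \<Rightarrow> real) \<Rightarrow> ('c \<Rightarrow> 'd \<Rightarrow> real) \<Rightarrow> real" where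
  "value \<alpha> \<beta> = Min ((\<lambda>c. \<alpha> c * context_value c (\<beta> c)) ` C)"

definition optimal :: "('c \<Rightarrow> real) \<Rightarrow> ('c \<Rightarrow> 'd \<Rightarrow> real) \<Rightarrow> bool" where
  "optimal \<alpha> \<beta> \<longleftrightarrow>
     feasible C Dc \<alpha> \<beta> \<and> (\<forall>\<alpha>' \<beta>'. feasible C Dc \<alpha>' \<beta>' \<longrightarrow> value \<alpha>' \<beta>' \<le> value \<alpha> \<beta>)"

lemma finite_P: "c \<in> C \<Longrightarrow> finite (P c)"
  using finite_Dc P_subset by (rule finite_subset[rotated])

lemma finite_U: "c \<in> C \<Longrightarrow> finite (U c)"
  using finite_Dc U_subset by (rule finite_subset[rotated])

lemma context_value_le:
  "\<lbrakk>c \<in> C; d \<in> P c; d' \<in> U c\<rbrakk> \<Longrightarrow> context_value c w \<le> G d d' (w d) (w d')"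
  unfolding context_value_def using finite_P finite_U
  by (meson Min_le finite_imageI image_eqI order_trans)

lemma less_context_value_iff:
  "c \<in> C \<Longrightarrow> r < context_value c w \<longleftrightarrow> (\<forall>d\<in>P c. \<forall>d'\<in>U c. r < G d d' (w d) (w d'))"
  unfolding context_value_def using finite_P finite_U P_nonempty U_nonempty by simp

lemma value_le: "c \<in> C \<Longrightarrow> value \<alpha> \<beta> \<le> \<alpha> c * context_value c (\<beta> c)"
  unfolding value_def using finite_C by simp

lemma less_value_iff: "r < value \<alpha> \<beta> \<longleftrightarrow> (\<forall>c\<in>C. r < \<alpha> c * context_value c (\<beta> c))"
  unfolding value_def using finite_C C_nonempty by simp

lemma exists_feasible_value_pos: "\<exists>\<alpha> \<beta>. feasible C Dc \<alpha> \<beta> \<and> 0 < value \<alpha> \<beta>"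
proof (intro exI conjI)
  have card_Dc: "0 < card (Dc c)" if "c \<in> C" for c
    using finite_Dc[OF that] P_subset[OF that] P_nonempty[OF that] by (auto simp: card_gt_0_iff)
  moreover have "0 < card C"
    using finite_C C_nonempty by (simp add: card_gt_0_iff)
  ultimately show "feasible C Dc (\<lambda>c. 1 / card C) (\<lambda>c d. 1 / card (Dc c))"
    unfolding feasible_def by simp
  show "0 < value (\<lambda>c. 1 / card C) (\<lambda>c d. 1 / card (Dc c))"
    unfolding less_value_iff using \<open>0 < card C\<close> card_Dc
    by (simp add: less_context_value_iff G_pos)
qed

lemma optimal_value_pos: "optimal \<alpha> \<beta> \<Longrightarrow> 0 < value \<alpha> \<beta>"
  using exists_feasible_value_pos unfolding optimal_def by (blast intro: less_le_trans)

lemma optimal_not_raisable: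
  assumes "optimal \<alpha> \<beta>" and "feasible C Dc \<alpha> b"
    and "\<forall>c\<in>C. value \<alpha> \<beta> \<le> \<alpha> c * context_value c (b c)" and "c0 \<in> C"
  shows "\<alpha> c0 * context_value c0 (b c0) \<le> value \<alpha> \<beta>"
proof (rule ccontr)
  assume "\<not> ?thesis"
  moreover have "\<forall>c\<in>C. 0 \<le> \<alpha> c" "sum \<alpha> C = 1"
    using assms(2) unfolding feasible_def by auto
  ultimately obtain \<alpha>' where "\<forall>c\<in>C. 0 \<le> \<alpha>' c" "sum \<alpha>' C = 1"
    and "\<forall>c\<in>C. value \<alpha> \<beta> < \<alpha>' c * context_value c (b c)"
    using simplex_raise_min[OF finite_C _ _ optimal_value_pos[OF assms(1)] assms(3,4)] by auto
  then have "feasible C Dc \<alpha>' b" and "value \<alpha> \<beta> < value \<alpha>' b"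
    using assms(2) unfolding feasible_def less_value_iff by auto
  then show False
    using assms(1) unfolding optimal_def by (meson not_less)
qed

lemma optimal_context_balanced:
  "optimal \<alpha> \<beta> \<Longrightarrow> c \<in> C \<Longrightarrow> \<alpha> c * context_value c (\<beta> c) = value \<alpha> \<beta>"
  using optimal_not_raisable[of \<alpha> \<beta> \<beta> c] value_le unfolding optimal_def by (simp add: antisym)

lemma optimal_context_pos:
  assumes "optimal \<alpha> \<beta>" "c \<in> C"
  shows "0 < \<alpha> c" "0 < context_value c (\<beta> c)"
proof -
  have "0 < \<alpha> c * context_value c (\<beta> c)" "0 \<le> \<alpha> c"
    using optimal_context_balanced[OF assms] optimal_value_pos[OF assms(1)] assms
    unfolding optimal_def feasible_def by auto
  then show "0 < \<alpha> c" "0 < context_value c (\<beta> c)"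
    by (auto simp: zero_less_mult_iff)
qed

lemma weights_pos_if_G_pos:
  assumes "c \<in> C" "d \<in> P c" "d' \<in> U c" "0 \<le> w d" "0 \<le> w d'" "0 < G d d' (w d) (w d')"
  shows "0 < w d" "0 < w d'"
  using G_eq_0[OF assms(1-3), of "w d" "w d'"] assms(4-6) by force+

lemma context_value_rescaled_less:
  assumes "c \<in> C" and w: "\<forall>d\<in>Dc c. 0 \<le> w d" and pos: "0 < context_value c w"
    and "0 < s" "1 < t"
    and shrunk: "\<forall>d\<in>Dc c. s * w d \<le> w' d" and scaled: "\<forall>d\<in>Dc c - {e}. w' d = t * w d"
    and through_e: "\<forall>d\<in>P c. \<forall>d'\<in>U c. e \<in> {d, d'} \<longrightarrow> context_value c w < s * G d d' (w d) (w d')"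
  shows "context_value c w < context_value c w'"
  unfolding less_context_value_iff[OF \<open>c \<in> C\<close>]
proof (intro ballI)
  fix d d' assume d: "d \<in> P c" and d': "d' \<in> U c"
  then have "d \<in> Dc c" "d' \<in> Dc c"
    using P_subset U_subset \<open>c \<in> C\<close> by auto
  note scale = G_scale_mono[OF \<open>c \<in> C\<close> d d' w[rule_format, OF \<open>d \<in> Dc c\<close>]
                             w[rule_format, OF \<open>d' \<in> Dc c\<close>]]
  show "context_value c w < G d d' (w' d) (w' d')"
  proof (cases "e \<in> {d, d'}")
    case True
    then show ?thesis
      using through_e d d' scale[of s] \<open>0 < s\<close> shrunk \<open>d \<in> Dc c\<close> \<open>d' \<in> Dc c\<close>
      by (meson order_less_le_trans)
  next
    case False
    then have "w' d = t * w d" "w' d' = t * w d'"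
      using scaled \<open>d \<in> Dc c\<close> \<open>d' \<in> Dc c\<close> by auto
    have "context_value c w \<le> G d d' (w d) (w d')"
      using context_value_le[OF \<open>c \<in> C\<close> d d'] .
    also have "\<dots> < t * G d d' (w d) (w d')"
      using calculation pos \<open>1 < t\<close> by simp
    also have "\<dots> \<le> G d d' (w' d) (w' d')"
      using scale[of t] \<open>1 < t\<close> \<open>w' d = t * w d\<close> \<open>w' d' = t * w d'\<close> by simp
    finally show ?thesis .
  qed
qed

lemma context_value_increase:
  assumes "c \<in> C" and w: "\<forall>d\<in>Dc c. 0 \<le> w d" "sum w (Dc c) = 1"
    and pos: "0 < context_value c w"
    and pair: "d0 \<in> P c" "d0' \<in> U c" "e \<in> {d0, d0'}"
    and above: "\<forall>d\<in>P c. \<forall>d'\<in>U c. e \<in> {d, d'} \<longrightarrow> context_value c w < G d d' (w d) (w d')"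
  obtains w' where "\<forall>d\<in>Dc c. 0 \<le> w' d" "sum w' (Dc c) = 1" "context_value c w < context_value c w'"
proof -
  define F where "F = context_value c w"
  define E where "E = {p \<in> P c \<times> U c. e \<in> {fst p, snd p}}"
  define m0 where "m0 = Min ((\<lambda>p. G (fst p) (snd p) (w (fst p)) (w (snd p))) ` E)"
  have "finite E" "(d0, d0') \<in> E"
    unfolding E_def using finite_P[OF \<open>c \<in> C\<close>] finite_U[OF \<open>c \<in> C\<close>] pair by auto
  then have "F < m0"
    unfolding m0_def F_def E_def using above by (subst Min_gr_iff) auto
  \<comment> \<open>lowering the weight of e by the factor 1 - \<epsilon> keeps every pair through e above F,
      while the renormalisation strictly raises every other pair\<close>
  define \<epsilon> where "\<epsilon> = (m0 - F) / (2 * m0)"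
  have "0 < \<epsilon>" "\<epsilon> < 1" "F < (1 - \<epsilon>) * m0"
    unfolding \<epsilon>_def using \<open>F < m0\<close> pos F_def by (simp_all add: field_simps)
  have through_e: "F < (1 - \<epsilon>) * G d d' (w d) (w d')"
    if "d \<in> P c" "d' \<in> U c" "e \<in> {d, d'}" for d d'
  proof -
    have "(d, d') \<in> E"
      using that by (simp add: E_def)
    then have "m0 \<le> G d d' (w d) (w d')"
      unfolding m0_def using \<open>finite E\<close>
      by (metis (no_types, lifting) Min_le finite_imageI fst_conv snd_conv image_eqI)
    then show ?thesis
      using \<open>F < (1 - \<epsilon>) * m0\<close> \<open>\<epsilon> < 1\<close> by (smt (verit) mult_left_mono)
  qed
  have "d0 \<in> Dc c" "d0' \<in> Dc c"
    using pair P_subset U_subset \<open>c \<in> C\<close> by auto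
  moreover have "0 < G d0 d0' (w d0) (w d0')"
    using above pair pos by force
  ultimately have "0 < w d0" "0 < w d0'"
    using weights_pos_if_G_pos[OF \<open>c \<in> C\<close> pair(1,2)] w(1) by auto
  then have "e \<in> Dc c" "0 < w e"
    using pair \<open>d0 \<in> Dc c\<close> \<open>d0' \<in> Dc c\<close> by auto
  then obtain t w' where "1 < t" "\<forall>d\<in>Dc c. 0 \<le> w' d" "sum w' (Dc c) = 1"
    "\<forall>d\<in>Dc c. (1 - \<epsilon>) * w d \<le> w' d" "\<forall>d\<in>Dc c - {e}. w' d = t * w d"
    using simplex_shrink_coordinate[OF finite_Dc[OF \<open>c \<in> C\<close>] w _ _ \<open>0 < \<epsilon>\<close> \<open>\<epsilon> < 1\<close>] by blast
  moreover have "F < context_value c w'"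
    unfolding F_def using \<open>c \<in> C\<close> w(1) pos \<open>\<epsilon> < 1\<close> calculation through_e[unfolded F_def]
    by (intro context_value_rescaled_less[where s = "1 - \<epsilon>" and t = t and e = e]) auto
  ultimately show ?thesis
    using that F_def by blast
qed

lemma optimal_pair_attains_context_value:
  assumes opt: "optimal \<alpha> \<beta>" and "c \<in> C" "d0 \<in> P c" "d0' \<in> U c" "e \<in> {d0, d0'}"
  shows "\<exists>d\<in>P c. \<exists>d'\<in>U c. e \<in> {d, d'} \<and> G d d' (\<beta> c d) (\<beta> c d') = context_value c (\<beta> c)"
proof (rule ccontr)
  assume none: "\<not> ?thesis"
  have above: "\<forall>d\<in>P c. \<forall>d'\<in>U c. e \<in> {d, d'} \<longrightarrow>
                 context_value c (\<beta> c) < G d d' (\<beta> c d) (\<beta> c d')"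
  proof (intro ballI impI)
    fix d d' assume "d \<in> P c" "d' \<in> U c" "e \<in> {d, d'}"
    then show "context_value c (\<beta> c) < G d d' (\<beta> c d) (\<beta> c d')"
      using none context_value_le[OF \<open>c \<in> C\<close> \<open>d \<in> P c\<close> \<open>d' \<in> U c\<close>]
      by (metis order_le_neq_trans)
  qed
  have feas: "feasible C Dc \<alpha> \<beta>"
    using opt unfolding optimal_def by blast
  then have "\<forall>d\<in>Dc c. 0 \<le> \<beta> c d" "sum (\<beta> c) (Dc c) = 1"
    using \<open>c \<in> C\<close> unfolding feasible_def by auto
  then obtain w where w: "\<forall>d\<in>Dc c. 0 \<le> w d" "sum w (Dc c) = 1"
    and raised: "context_value c (\<beta> c) < context_value c w"
    using context_value_increase[OF \<open>c \<in> C\<close> _ _ optimal_context_pos(2)[OF opt \<open>c \<in> C\<close>]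
        assms(3-5) above] by blast
  define \<beta>' where "\<beta>' = \<beta>(c := w)"
  have feas': "feasible C Dc \<alpha> \<beta>'"
    using feas w unfolding feasible_def \<beta>'_def by auto
  have strict: "value \<alpha> \<beta> < \<alpha> c * context_value c (\<beta>' c)"
    using optimal_context_balanced[OF opt \<open>c \<in> C\<close>] optimal_context_pos(1)[OF opt \<open>c \<in> C\<close>] raised
    unfolding \<beta>'_def by (metis fun_upd_same mult_strict_left_mono)
  have "\<forall>c'\<in>C. value \<alpha> \<beta> \<le> \<alpha> c' * context_value c' (\<beta>' c')"
  proof
    fix c' assume "c' \<in> C"
    show "value \<alpha> \<beta> \<le> \<alpha> c' * context_value c' (\<beta>' c')"
    proof (cases "c' = c")
      case False
      then show ?thesis
        using optimal_context_balanced[OF opt \<open>c' \<in> C\<close>] unfolding \<beta>'_def by simp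
    qed (use strict in simp)
  qed
  then show False
    using optimal_not_raisable[OF opt feas' _ \<open>c \<in> C\<close>] strict by simp
qed

theorem optimal_pairwise_balanced:
  assumes opt: "optimal \<alpha> \<beta>"
  shows "\<exists>z>0. \<forall>c\<in>C. \<forall>d\<in>P c. \<forall>d'\<in>U c.
           Min ((\<lambda>dt. \<alpha> c * G dt d' (\<beta> c dt) (\<beta> c d')) ` P c) = z \<and>
           Min ((\<lambda>dt'. \<alpha> c * G d dt' (\<beta> c d) (\<beta> c dt')) ` U c) = z"
proof (intro exI[of _ "value \<alpha> \<beta>"] conjI ballI)
  fix c d d' assume "c \<in> C" "d \<in> P c" "d' \<in> U c"
  have lower: "value \<alpha> \<beta> \<le> \<alpha> c * G dt dt' (\<beta> c dt) (\<beta> c dt')"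
    if "dt \<in> P c" "dt' \<in> U c" for dt dt'
    using optimal_context_balanced[OF opt \<open>c \<in> C\<close>] optimal_context_pos(1)[OF opt \<open>c \<in> C\<close>]
      context_value_le[OF \<open>c \<in> C\<close> that] by (metis less_imp_le mult_left_mono)
  have attained: "\<exists>dt\<in>P c. \<exists>dt'\<in>U c. e \<in> {dt, dt'} \<and>
                    value \<alpha> \<beta> = \<alpha> c * G dt dt' (\<beta> c dt) (\<beta> c dt')" if "e \<in> {d, d'}" for e
    using optimal_pair_attains_context_value[OF opt \<open>c \<in> C\<close> \<open>d \<in> P c\<close> \<open>d' \<in> U c\<close> that]
    unfolding optimal_context_balanced[OF opt \<open>c \<in> C\<close>, symmetric] by metis
  have "d' \<notin> P c" "d \<notin> U c"
    using P_U_disjoint[OF \<open>c \<in> C\<close>] \<open>d \<in> P c\<close> \<open>d' \<in> U c\<close> by auto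
  then have "value \<alpha> \<beta> \<in> (\<lambda>dt. \<alpha> c * G dt d' (\<beta> c dt) (\<beta> c d')) ` P c"
    "value \<alpha> \<beta> \<in> (\<lambda>dt'. \<alpha> c * G d dt' (\<beta> c d) (\<beta> c dt')) ` U c"
    using attained[of d'] attained[of d] by auto
  then show "Min ((\<lambda>dt. \<alpha> c * G dt d' (\<beta> c dt) (\<beta> c d')) ` P c) = value \<alpha> \<beta>"
    "Min ((\<lambda>dt'. \<alpha> c * G d dt' (\<beta> c d) (\<beta> c dt')) ` U c) = value \<alpha> \<beta>"
    using lower \<open>d \<in> P c\<close> \<open>d' \<in> U c\<close> finite_P[OF \<open>c \<in> C\<close>] finite_U[OF \<open>c \<in> C\<close>]
    by (auto intro!: Min_eqI)
qed (use optimal_value_pos[OF opt] in simp)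

end

lemma max_min_allocation_rateG:
  fixes KL :: "real \<times> 'h::topological_space \<Rightarrow> real \<times> 'h \<Rightarrow> real"
    and thstar :: "'d \<Rightarrow> real \<times> 'h"
  defines "mu \<equiv> \<lambda>d. fst (thstar d)"
  assumes "finite C" "C \<noteq> {}" and finite_Dc: "\<forall>c\<in>C. finite (Dc c)"
    and m: "\<forall>c\<in>C. 0 < m c" "\<forall>c\<in>C. m c < card (Dc c)"
    and "compact T" and thstar_in: "\<forall>c\<in>C. \<forall>d\<in>Dc c. thstar d \<in> T"
    and inj: "\<forall>c\<in>C. inj_on mu (Dc c)"
    and KL_nonneg: "\<forall>a\<in>T. \<forall>b\<in>T. 0 \<le> KL a b" and KL_self: "\<forall>a\<in>T. KL a a = 0"
    and KL_eq_0: "\<forall>a\<in>T. \<forall>b\<in>T. KL a b = 0 \<longrightarrow> fst a = fst b"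
    and KL_cont: "\<forall>a\<in>T. continuous_on T (KL a)"
  shows "max_min_allocation C Dc (topset Dc m mu) (botset Dc m mu) (rateG KL T thstar)"
proof
  fix c assume c: "c \<in> C"
  show "topset Dc m mu c \<subseteq> Dc c" "botset Dc m mu c \<subseteq> Dc c"
    "topset Dc m mu c \<inter> botset Dc m mu c = {}"
    unfolding topset_def botset_def by auto
  have "Dc c \<noteq> {}"
    using m(2) c by auto
  then show "topset Dc m mu c \<noteq> {}" "botset Dc m mu c \<noteq> {}"
    using topset_nonempty[of Dc c m mu] botset_nonempty[of Dc c mu m] finite_Dc m inj c
    by simp_all
  fix d d' assume d: "d \<in> topset Dc m mu c" and d': "d' \<in> botset Dc m mu c"
  then have in_T: "thstar d \<in> T" "thstar d' \<in> T"
    using thstar_in c unfolding topset_def botset_def by auto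
  fix x y :: real
  show "\<lbrakk>0 \<le> x; 0 \<le> y; x = 0 \<or> y = 0\<rbrakk> \<Longrightarrow> rateG KL T thstar d d' x y = 0"
    using rateG_eq_0[of T KL thstar d d', OF KL_nonneg in_T KL_self] .
  show "\<And>s x' y'. \<lbrakk>0 \<le> x; 0 \<le> y; 0 < s; s * x \<le> x'; s * y \<le> y'\<rbrakk>
          \<Longrightarrow> s * rateG KL T thstar d d' x y \<le> rateG KL T thstar d d' x' y'"
    using rateG_scale_mono[of T KL thstar d d', OF KL_nonneg in_T] .
  have "fst (thstar d') < fst (thstar d)"
    using botset_mean_less_topset[OF _ _ d d'] finite_Dc inj c unfolding mu_def by simp
  then show "\<lbrakk>0 < x; 0 < y\<rbrakk> \<Longrightarrow> 0 < rateG KL T thstar d d' x y"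
    using rateG_pos[of T KL thstar d d', OF KL_nonneg in_T \<open>compact T\<close> KL_cont KL_eq_0] by simp
qed (use assms in auto)

theorem proposition5:
  fixes C :: "'c set" and Dc :: "'c \<Rightarrow> 'd set" and m :: "'c \<Rightarrow> nat"
    and M :: "real set" and H :: "'h::euclidean_space set"
    and thstar :: "'d \<Rightarrow> real \<times> 'h"
    and KL :: "real \<times> 'h \<Rightarrow> real \<times> 'h \<Rightarrow> real"
    and \<alpha> :: "'c \<Rightarrow> real" and \<beta> :: "'c \<Rightarrow> 'd \<Rightarrow> real"
  assumes finC: "finite C" and neC: "C \<noteq> {}"
    and finD: "\<forall>c\<in>C. finite (Dc c)"
    and disj: "\<forall>c\<in>C. \<forall>c'\<in>C. c \<noteq> c' \<longrightarrow> Dc c \<inter> Dc c' = {}"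
    and m_pos: "\<forall>c\<in>C. 0 < m c" and m_lt: "\<forall>c\<in>C. m c < card (Dc c)"
    and cpt: "compact (M \<times> H)"
    and thstar_in: "\<forall>c\<in>C. \<forall>d\<in>Dc c. thstar d \<in> M \<times> H"
    and distinct_mu: "inj_on (\<lambda>d. fst (thstar d)) (\<Union>c\<in>C. Dc c)"
    and KL_nonneg: "\<forall>th\<in>M \<times> H. \<forall>th'\<in>M \<times> H. KL th th' \<ge> 0"
    and KL_self: "\<forall>th\<in>M \<times> H. KL th th = 0"
    and KL_zero: "\<forall>th\<in>M \<times> H. \<forall>th'\<in>M \<times> H. KL th th' = 0 \<longrightarrow> fst th = fst th'"
    and KL_C1: "\<forall>ths\<in>M \<times> H. \<exists>D'. (\<forall>th\<in>M \<times> H.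
                   (KL ths has_derivative blinfun_apply (D' th)) (at th within M \<times> H))
                 \<and> continuous_on (M \<times> H) D'"
    and feas: "feasible C Dc \<alpha> \<beta>"
    and opt: "\<forall>\<alpha>' \<beta>'. feasible C Dc \<alpha>' \<beta>' \<longrightarrow>
               objective KL (M \<times> H) thstar C Dc m \<alpha>' \<beta>' \<le> objective KL (M \<times> H) thstar C Dc m \<alpha> \<beta>"
  shows "\<exists>z>0. \<forall>c\<in>C.
           \<forall>d\<in>topset Dc m (\<lambda>d. fst (thstar d)) c. \<forall>d'\<in>botset Dc m (\<lambda>d. fst (thstar d)) c.
             Min ((\<lambda>dt. \<alpha> c * rateG KL (M \<times> H) thstar dt d' (\<beta> c dt) (\<beta> c d'))
                    ` topset Dc m (\<lambda>d. fst (thstar d)) c) = z \<and>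
             Min ((\<lambda>dt'. \<alpha> c * rateG KL (M \<times> H) thstar d dt' (\<beta> c d) (\<beta> c dt'))
                    ` botset Dc m (\<lambda>d. fst (thstar d)) c) = z"
proof -
  have KL_cont: "\<forall>a\<in>M \<times> H. continuous_on (M \<times> H) (KL a)"
  proof
    fix a assume "a \<in> M \<times> H"
    then obtain D' where "\<forall>th\<in>M \<times> H. (KL a has_derivative blinfun_apply (D' th)) (at th within M \<times> H)"
      using KL_C1 by blast
    then show "continuous_on (M \<times> H) (KL a)"
      by (intro has_derivative_continuous_on) auto
  qed
  have "\<forall>c\<in>C. inj_on (\<lambda>d. fst (thstar d)) (Dc c)"
    using distinct_mu by (meson UN_upper inj_on_subset)
  then interpret max_min_allocation C Dc "topset Dc m (\<lambda>d. fst (thstar d))"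
      "botset Dc m (\<lambda>d. fst (thstar d))" "rateG KL (M \<times> H) thstar"
    using max_min_allocation_rateG[OF finC neC finD m_pos m_lt cpt thstar_in _
        KL_nonneg KL_self KL_zero KL_cont] by blast
  have "objective KL (M \<times> H) thstar C Dc m = value"
    by (simp add: fun_eq_iff objective_def value_def context_value_def)
  then have "optimal \<alpha> \<beta>"
    using feas opt unfolding optimal_def by simp
  then show ?thesis
    by (rule optimal_pairwise_balanced)
qed

end
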